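(* Let $q>1$, $0\le M_0<M$, let $u$ be a sufficiently smooth $L$-periodic solution of $u_t=-\alpha uu_x+\beta u_{xxx}$ on $[0,T]\times\mathbb{R}$, $r>\sup_{t,x}|u(t,x)|$. Assume $u^{(0)}_k=u(0,k\Delta x)$, that $u^{(0)},\dots,u^{(M_0+1)}$ are obtained successively as solutions of the scheme, that $\|u^{(m)}\|_\infty\le r$ for $m\le M_0$, that $\Delta t<\min\{\varepsilon_1(q,r,\Delta x),\varepsilon_2(q,r,\Delta x)\}$, and that $\|u^{(M_0+1)}\|_\infty\le qr$. For $\theta>0$ set $\mathcal{E}'^{(m)}=\theta\|e^{(m)}\|^2+\|\delta^+_xe^{(m)}\|^2+A^{(m)}$ with $A^{(m)}=\frac{\alpha}{3\beta}\sum_{k=1}^K(e^{(m)}_k)^3\Delta x$. If $\theta\ge 1+\frac{2qr|\alpha|}{3|\beta|}$, then $0\le\|e^{(m)}\|_{H^1}^2\le\mathcal{E}'^{(m)}$ for $m=0,\dots,M_0+1$.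
   Context: $L>0$, $K\in\mathbb{N}$, $\Delta x=L/K$; $T>0$, $M\in\mathbb{N}$, $\Delta t=T/M$; $\alpha\in\mathbb{R}$, $\beta\ne0$. Grid functions are $K$-periodic real sequences. $\delta^+_x v_k=(v_{k+1}-v_k)/\Delta x$, $\delta^{\langle 1\rangle}_x v_k = (v_{k+1}-v_{k-1})/(2\Delta x)$, $\delta^{\langle 2\rangle}_x v_k = (v_{k+1}-2v_k+v_{k-1})/(\Delta x)^2$, $\|v\|=(\sum_{k=1}^K v_k^2\Delta x)^{1/2}$, $\|v\|_\infty=\max_k|v_k|$, $\|v\|_{H^1}=(\|v\|^2+\|\delta^+_xv\|^2)^{1/2}$; $\delta^+_t v^{(n)}=(v^{(n+1)}-v^{(n)})/\Delta t$, $\mu^+_t v^{(n)}=(v^{(n+1)}+v^{(n)})/2$. The scheme: $u^{(n+1)}$ solves it at step $n$ if $\delta^+_t u^{(n)}_k = -\frac{\alpha}{6}\delta^{\langle 1\rangle}_x\{(u^{(n+1)}_k)^2 + u^{(n+1)}_k u^{(n)}_k + (u^{(n)}_k)^2\} + \beta\delta^{\langle 1\rangle}_x\delta^{\langle 2\rangle}_x \mu^+_t u^{(n)}_k$ for all $k$. $\varepsilon_1(q,r,\Delta x) = (q-1)(\Delta x)^3[\frac{|\alpha|}{6}(\Delta x)^2(q^2+q+1)r + \frac{3}{2}|\beta|(q+1)]^{-1}$, $\varepsilon_2(q,r,\Delta x) = (\Delta x)^3[\frac{|\alpha|}{6}(\Delta x)^2(2q+1)r + \frac{3}{2}|\beta|]^{-1}$.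 $\tilde u^{(m)}_k=u(m\Delta t,k\Delta x)$, $e^{(m)}=u^{(m)}-\tilde u^{(m)}$. *)

theory Defs
  imports "HOL-Analysis.Analysis"
begin

definition periodic_grid :: "nat \<Rightarrow> (int \<Rightarrow> real) \<Rightarrow> bool" where
  "periodic_grid K v \<longleftrightarrow> (\<forall>k. v (k + int K) = v k)"

definition dxp :: "real \<Rightarrow> (int \<Rightarrow> real) \<Rightarrow> int \<Rightarrow> real" where
  "dxp dx v k = (v (k + 1) - v k) / dx"

definition dx1 :: "real \<Rightarrow> (int \<Rightarrow> real) \<Rightarrow> int \<Rightarrow> real" where
  "dx1 dx v k = (v (k + 1) - v (k - 1)) / (2 * dx)"

definition dx2 :: "real \<Rightarrow> (int \<Rightarrow> real) \<Rightarrow> int \<Rightarrow> real" where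
  "dx2 dx v k = (v (k + 1) - 2 * v k + v (k - 1)) / dx ^ 2"

definition gnorm :: "nat \<Rightarrow> real \<Rightarrow> (int \<Rightarrow> real) \<Rightarrow> real" where
  "gnorm K dx v = sqrt (\<Sum>k = 1..int K. (v k)^2 * dx)"

definition gsup :: "nat \<Rightarrow> (int \<Rightarrow> real) \<Rightarrow> real" where
  "gsup K v = Max ((\<lambda>k. \<bar>v k\<bar>) ` {1..int K})"

definition gH1 :: "nat \<Rightarrow> real \<Rightarrow> (int \<Rightarrow> real) \<Rightarrow> real" where
  "gH1 K dx v = sqrt ((gnorm K dx v)^2 + (gnorm K dx (dxp dx v))^2)"

definition scheme_step :: "real \<Rightarrow> real \<Rightarrow> real \<Rightarrow> real \<Rightarrow> (int \<Rightarrow> real) \<Rightarrow> (int \<Rightarrow> real) \<Rightarrow> bool" where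
  "scheme_step \<alpha> \<beta> dx dt uold unew \<longleftrightarrow>
     (\<forall>k. (unew k - uold k) / dt =
        - (\<alpha> / 6) * dx1 dx (\<lambda>j. (unew j)^2 + unew j * uold j + (uold j)^2) k
        + \<beta> * dx1 dx (dx2 dx (\<lambda>j. (unew j + uold j) / 2)) k)"

definition eps1 :: "real \<Rightarrow> real \<Rightarrow> real \<Rightarrow> real \<Rightarrow> real \<Rightarrow> real" where
  "eps1 \<alpha> \<beta> q r dx = (q - 1) * dx ^ 3 /
     (\<bar>\<alpha>\<bar> / 6 * dx ^ 2 * (q^2 + q + 1) * r + 3 / 2 * \<bar>\<beta>\<bar> * (q + 1))"

definition eps2 :: "real \<Rightarrow> real \<Rightarrow> real \<Rightarrow> real \<Rightarrow> real \<Rightarrow> real" where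
  "eps2 \<alpha> \<beta> q r dx = dx ^ 3 /
     (\<bar>\<alpha>\<bar> / 6 * dx ^ 2 * (2 * q + 1) * r + 3 / 2 * \<bar>\<beta>\<bar>)"

definition kdv_solution :: "real \<Rightarrow> real \<Rightarrow> real \<Rightarrow> real \<Rightarrow> (real \<Rightarrow> real \<Rightarrow> real) \<Rightarrow> bool" where
  "kdv_solution \<alpha> \<beta> L T u \<longleftrightarrow>
    (\<exists>ut ux uxx uxxx :: real \<Rightarrow> real \<Rightarrow> real.
       continuous_on ({0..T} \<times> UNIV) (\<lambda>p. u (fst p) (snd p)) \<and>
       continuous_on ({0..T} \<times> UNIV) (\<lambda>p. ut (fst p) (snd p)) \<and>
       continuous_on ({0..T} \<times> UNIV) (\<lambda>p. ux (fst p) (snd p)) \<and>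
       continuous_on ({0..T} \<times> UNIV) (\<lambda>p. uxx (fst p) (snd p)) \<and>
       continuous_on ({0..T} \<times> UNIV) (\<lambda>p. uxxx (fst p) (snd p)) \<and>
       (\<forall>t\<in>{0..T}. \<forall>x.
          ((\<lambda>s. u s x) has_real_derivative ut t x) (at t within {0..T}) \<and>
          ((\<lambda>y. u t y) has_real_derivative ux t x) (at x) \<and>
          ((\<lambda>y. ux t y) has_real_derivative uxx t x) (at x) \<and>
          ((\<lambda>y. uxx t y) has_real_derivative uxxx t x) (at x) \<and>
          ut t x = - \<alpha> * u t x * ux t x + \<beta> * uxxx t x \<and>
          u t (x + L) = u t x))"

end

theory Submission
  imports Defs
begin

text \<open>Since \<open>|u| < r \<le> q r\<close> and every grid solution \<open>u\<^sup>m\<close> is bounded by \<open>q r\<close>, the error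
  satisfies \<open>|e\<^sup>m\<^sub>k| \<le> 2 q r\<close>. Hence \<open>|A\<^sup>m| \<le> 2 q r |\<alpha>| / (3 |\<beta>|) \<cdot> \<parallel>e\<^sup>m\<parallel>\<^sup>2 \<le> (\<theta> - 1) \<parallel>e\<^sup>m\<parallel>\<^sup>2\<close>,
  and this is the claimed inequality.\<close>

lemma periodic_shift_int:
  fixes f :: "real \<Rightarrow> real"
  assumes per: "\<forall>x. f (x + L) = f x"
  shows "f (x + real_of_int n * L) = f x"
proof -
  have shift_nat: "f (y + real m * L) = f y" for y m
  proof (induction m)
    case (Suc m)
    have "f (y + real (Suc m) * L) = f (y + real m * L + L)" by (simp add: algebra_simps)
    with Suc per show ?case by simp
  qed simp
  show ?thesis
  proof (cases "n \<ge> 0")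
    case True
    then show ?thesis using shift_nat[of x "nat n"] by simp
  next
    case False
    then show ?thesis using shift_nat[of "x + real_of_int n * L" "nat (- n)"] by simp
  qed
qed

lemma bdd_above_abs_periodic:
  fixes f :: "real \<Rightarrow> real \<Rightarrow> real"
  assumes cont: "continuous_on ({0..T} \<times> UNIV) (\<lambda>p. f (fst p) (snd p))"
    and per: "\<forall>t\<in>{0..T}. \<forall>x. f t (x + L) = f t x"
    and L: "L > 0"
  shows "bdd_above ((\<lambda>p. \<bar>f (fst p) (snd p)\<bar>) ` ({0..T} \<times> UNIV))"
proof -
  have "compact ((\<lambda>p. f (fst p) (snd p)) ` ({0..T} \<times> {0..L}))"
    by (rule compact_continuous_image) (auto intro: continuous_on_subset[OF cont] compact_Times)
  then obtain C where C: "\<forall>y\<in>(\<lambda>p. f (fst p) (snd p)) ` ({0..T} \<times> {0..L}). norm y \<le> C"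
    using compact_imp_bounded bounded_iff by metis
  have "\<bar>f t x\<bar> \<le> C" if t: "t \<in> {0..T}" for t x
  proof -
    define n where "n = \<lfloor>x / L\<rfloor>"
    define y where "y = x - real_of_int n * L"
    have y: "y \<in> {0..L}"
      using floor_divide_lower[OF L, of x] floor_divide_upper[OF L, of x]
      unfolding y_def n_def by (auto simp: algebra_simps)
    have "f t x = f t (y + real_of_int n * L)" unfolding y_def by simp
    also have "\<dots> = f t y" using per t by (intro periodic_shift_int) auto
    finally show ?thesis using C y t by force
  qed
  then show ?thesis by (intro bdd_aboveI[where M = C]) auto
qed

lemma abs_le_SUP_kdv_solution:
  assumes "kdv_solution \<alpha> \<beta> L T u" and "L > 0" and "t \<in> {0..T}"
  shows "\<bar>u t x\<bar> \<le> (SUP p\<in>{0..T} \<times> UNIV. \<bar>u (fst p) (snd p)\<bar>)"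
proof -
  have "bdd_above ((\<lambda>p. \<bar>u (fst p) (snd p)\<bar>) ` ({0..T} \<times> UNIV))"
    using assms(1,2) unfolding kdv_solution_def by (intro bdd_above_abs_periodic) blast+
  then show ?thesis
    using cSUP_upper[of "(t, x)" "{0..T} \<times> UNIV" "\<lambda>p. \<bar>u (fst p) (snd p)\<bar>"] assms(3) by auto
qed

lemma abs_le_gsup:
  assumes "k \<in> {1..int K}"
  shows "\<bar>v k\<bar> \<le> gsup K v"
  unfolding gsup_def using assms by (intro Max_ge) auto

lemma gnorm_squared:
  assumes "dx \<ge> 0"
  shows "(gnorm K dx v)\<^sup>2 = (\<Sum>k = 1..int K. (v k)\<^sup>2 * dx)"
  unfolding gnorm_def using assms by (simp add: sum_nonneg)

lemma gH1_squared: "(gH1 K dx v)\<^sup>2 = (gnorm K dx v)\<^sup>2 + (gnorm K dx (dxp dx v))\<^sup>2"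
  unfolding gH1_def by simp

lemma abs_sum_cube_le:
  assumes dx: "dx \<ge> 0" and bound: "\<forall>k\<in>{1..int K}. \<bar>e k\<bar> \<le> B"
  shows "\<bar>\<Sum>k = 1..int K. (e k)^3 * dx\<bar> \<le> B * (gnorm K dx e)\<^sup>2"
proof -
  have "\<bar>\<Sum>k = 1..int K. (e k)^3 * dx\<bar> \<le> (\<Sum>k = 1..int K. \<bar>(e k)^3 * dx\<bar>)"
    by (rule sum_abs)
  also have "\<dots> \<le> (\<Sum>k = 1..int K. B * ((e k)\<^sup>2 * dx))"
  proof (rule sum_mono)
    fix k assume k: "k \<in> {1..int K}"
    have "\<bar>(e k)^3 * dx\<bar> = \<bar>e k\<bar> * ((e k)\<^sup>2 * dx)"
      using dx by (simp add: abs_mult power3_eq_cube power2_eq_square)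
    also have "\<dots> \<le> B * ((e k)\<^sup>2 * dx)"
      using bound k dx by (intro mult_right_mono) auto
    finally show "\<bar>(e k)^3 * dx\<bar> \<le> B * ((e k)\<^sup>2 * dx)" .
  qed
  also have "\<dots> = B * (gnorm K dx e)\<^sup>2"
    using dx by (simp add: gnorm_squared sum_distrib_left)
  finally show ?thesis .
qed

lemma gH1_squared_le_modified_energy:
  fixes e :: "int \<Rightarrow> real"
  assumes dx: "dx \<ge> 0" and bound: "\<forall>k\<in>{1..int K}. \<bar>e k\<bar> \<le> B"
    and \<theta>: "\<theta> \<ge> 1 + B * \<bar>\<alpha>\<bar> / (3 * \<bar>\<beta>\<bar>)" and \<beta>: "\<beta> \<noteq> 0"
  shows "(gH1 K dx e)\<^sup>2 \<le> \<theta> * (gnorm K dx e)\<^sup>2 + (gnorm K dx (dxp dx e))\<^sup>2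
           + \<alpha> / (3 * \<beta>) * (\<Sum>k = 1..int K. (e k)^3 * dx)"
proof -
  define S where "S = (\<Sum>k = 1..int K. (e k)^3 * dx)"
  define N where "N = (gnorm K dx e)\<^sup>2"
  have "\<bar>\<alpha> / (3 * \<beta>) * S\<bar> = \<bar>\<alpha>\<bar> / (3 * \<bar>\<beta>\<bar>) * \<bar>S\<bar>" by (simp add: abs_mult)
  also have "\<dots> \<le> \<bar>\<alpha>\<bar> / (3 * \<bar>\<beta>\<bar>) * (B * N)"
    using abs_sum_cube_le[OF dx bound] unfolding S_def N_def by (intro mult_left_mono) auto
  also have "\<dots> = B * \<bar>\<alpha>\<bar> / (3 * \<bar>\<beta>\<bar>) * N" by simp
  also have "\<dots> \<le> (\<theta> - 1) * N"
    using \<theta> unfolding N_def by (intro mult_right_mono) auto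
  finally have "- (\<alpha> / (3 * \<beta>) * S) \<le> (\<theta> - 1) * N" by linarith
  then show ?thesis unfolding gH1_squared S_def[symmetric] N_def[symmetric] by (simp add: algebra_simps)
qed

theorem lemma3p6:
  fixes \<alpha> \<beta> L T q r \<theta> :: real
    and K M M0 :: nat
    and u :: "real \<Rightarrow> real \<Rightarrow> real"
    and U :: "nat \<Rightarrow> int \<Rightarrow> real"
  defines "dx \<equiv> L / real K"
    and "dt \<equiv> T / real M"
  assumes hL: "L > 0" and hT: "T > 0" and hK: "K \<ge> 1" and hM: "M \<ge> 1"
    and h\<beta>: "\<beta> \<noteq> 0"
    and hq: "q > 1"
    and hM0: "M0 < M"
    and hu: "kdv_solution \<alpha> \<beta> L T u"
    and hr: "(SUP p\<in>{0..T} \<times> UNIV. \<bar>u (fst p) (snd p)\<bar>) < r"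
    and hper: "\<forall>m \<le> M0 + 1. periodic_grid K (U m)"
    and hinit: "\<forall>k. U 0 k = u 0 (real_of_int k * dx)"
    and hscheme: "\<forall>n \<le> M0. scheme_step \<alpha> \<beta> dx dt (U n) (U (Suc n))"
    and hbound: "\<forall>m \<le> M0. gsup K (U m) \<le> r"
    and hdt: "dt < min (eps1 \<alpha> \<beta> q r dx) (eps2 \<alpha> \<beta> q r dx)"
    and hlast: "gsup K (U (M0 + 1)) \<le> q * r"
    and h\<theta>pos: "\<theta> > 0"
    and h\<theta>: "\<theta> \<ge> 1 + 2 * q * r * \<bar>\<alpha>\<bar> / (3 * \<bar>\<beta>\<bar>)"
  shows "\<forall>m \<le> M0 + 1.
     (let e = (\<lambda>k. U m k - u (real m * dt) (real_of_int k * dx));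
          A = \<alpha> / (3 * \<beta>) * (\<Sum>k = 1..int K. (e k)^3 * dx)
      in 0 \<le> (gH1 K dx e)^2 \<and>
         (gH1 K dx e)^2 \<le> \<theta> * (gnorm K dx e)^2 + (gnorm K dx (dxp dx e))^2 + A)"
proof (intro allI impI)
  fix m assume m: "m \<le> M0 + 1"
  define e where "e = (\<lambda>k. U m k - u (real m * dt) (real_of_int k * dx))"
  have u_bound: "\<bar>u t x\<bar> \<le> r" if "t \<in> {0..T}" for t x
    using abs_le_SUP_kdv_solution[OF hu hL that, of x] hr by linarith
  have "0 \<le> r" using u_bound[of 0 0] hT by simp
  then have "r \<le> q * r" using hq by (simp add: mult_le_cancel_right1)
  have U_bound: "\<bar>U m k\<bar> \<le> q * r" if k: "k \<in> {1..int K}" for k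
  proof (cases "m \<le> M0")
    case True
    then show ?thesis using abs_le_gsup[OF k, of "U m"] hbound \<open>r \<le> q * r\<close> by force
  next
    case False
    then have "m = M0 + 1" using m by simp
    then show ?thesis using abs_le_gsup[OF k, of "U m"] hlast by simp
  qed
  have "real m * dt \<in> {0..T}"
    using m hM0 hT unfolding dt_def by (auto simp: field_simps)
  then have "\<bar>e k\<bar> \<le> 2 * q * r" if "k \<in> {1..int K}" for k
    using U_bound[OF that] u_bound[of "real m * dt" "real_of_int k * dx"] \<open>r \<le> q * r\<close>
    unfolding e_def by linarith
  then have "(gH1 K dx e)\<^sup>2 \<le> \<theta> * (gnorm K dx e)\<^sup>2 + (gnorm K dx (dxp dx e))\<^sup>2
              + \<alpha> / (3 * \<beta>) * (\<Sum>k = 1..int K. (e k)^3 * dx)"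
    using hL h\<theta> h\<beta> unfolding dx_def by (intro gH1_squared_le_modified_energy) auto
  then show "let e = (\<lambda>k. U m k - u (real m * dt) (real_of_int k * dx));
          A = \<alpha> / (3 * \<beta>) * (\<Sum>k = 1..int K. (e k)^3 * dx)
      in 0 \<le> (gH1 K dx e)^2 \<and>
         (gH1 K dx e)^2 \<le> \<theta> * (gnorm K dx e)^2 + (gnorm K dx (dxp dx e))^2 + A"
    unfolding e_def Let_def by simp
qed

end
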